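(* Let $w=i_n\cdots i_1$ be a reverse lattice word and $\sigma=\mathrm{std}(w)$. Then $T_w=P(\sigma^{-1})$.
   Context: A word $w=i_n\cdots i_1$ of positive integers is reverse lattice if in every suffix $i_k\cdots i_1$ the number of $j$'s is at least the number of $(j+1)$'s for every $j\geq1$. $\mathrm{std}(w)$: replace the letters of $w$ (read left to right) by $1,\ldots,n$, smaller letters first, equal letters increasing from left to right; a permutation in one-line notation. Partitions in French convention (rows numbered bottom to top). With $\lambda_0=\varnothing$ and $\lambda_k$ obtained from $\lambda_{k-1}$ by adding a box at the addable node in column $i_k$, $T_w$ is the tableau of shape $\lambda_n$ whose box in $\lambda_k\setminus\lambda_{k-1}$ contains $n-k+1$. $P(\pi)$ is the insertion tableau of the variant Robinson–Schensted algorithm: insert $\pi(1),\ldots,\pi(n)$ successively starting at the bottom row; if $y$ exceeds some entry of the current row, $y$ replaces the greatest entry $x<y$ of that row and $x$ is inserted into the next row up; otherwise $y$ is appended at the end of the row. *)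

theory Defs
  imports Main
begin

text \<open>Words: a word w = i_n ... i_1 is the list [i_n, ..., i_1] (leftmost letter first).
  The suffix i_k ... i_1 is drop (n - k) w, and i_k = w ! (n - k).\<close>

definition reverse_lattice :: "nat list \<Rightarrow> bool" where
  "reverse_lattice w \<longleftrightarrow>
     (\<forall>k \<le> length w. \<forall>j \<ge> 1.
        count_list (drop (length w - k) w) (Suc j) \<le> count_list (drop (length w - k) w) j)"

definition std :: "nat list \<Rightarrow> nat list" where
  "std w = map (\<lambda>p. Suc (card {q. q < length w \<and>
                 (w ! q < w ! p \<or> (w ! q = w ! p \<and> q < p))})) [0..<length w]"

definition perm_inv :: "nat list \<Rightarrow> nat list" where
  "perm_inv s = map (\<lambda>j. Suc (THE p. p < length s \<and> s ! p = j)) [1..<Suc (length s)]"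

text \<open>Tableaux: list of rows, numbered bottom to top (French convention);
  each row lists its entries in columns 1, 2, ... .\<close>
type_synonym tableau = "nat list list"

definition col_height :: "tableau \<Rightarrow> nat \<Rightarrow> nat" where
  "col_height T c = length (filter (\<lambda>row. c \<le> length row) T)"

definition add_in_col :: "nat \<Rightarrow> nat \<Rightarrow> tableau \<Rightarrow> tableau" where
  "add_in_col c v T =
     (let h = col_height T c in
      if h < length T then T[h := T ! h @ [v]] else T @ [[v]])"

definition T_of_word :: "nat list \<Rightarrow> tableau" where
  "T_of_word w =
     foldl (\<lambda>T k. add_in_col (w ! (length w - k)) (length w - k + 1) T) [] [1..<Suc (length w)]"

text \<open>Variant Robinson--Schensted row insertion, starting at the bottom row.\<close>
fun rs_insert :: "nat \<Rightarrow> tableau \<Rightarrow> tableau" where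
  "rs_insert y [] = [[y]]"
| "rs_insert y (row # rows) =
     (if \<exists>x \<in> set row. x < y
      then (let x = Max {x \<in> set row. x < y}
            in map (\<lambda>z. if z = x then y else z) row # rs_insert x rows)
      else (row @ [y]) # rows)"

definition P_tab :: "nat list \<Rightarrow> tableau" where
  "P_tab \<pi> = foldl (\<lambda>T y. rs_insert y T) [] \<pi>"

end

theory Submission
  imports Defs
begin

text \<open>Both sides are described column by column. In \<open>T\<^sub>w\<close> the column of the letter \<open>c\<close>
  holds the labels of the occurrences of \<open>c\<close>, the rightmost one at the bottom. The reverse lattice
  condition makes the columns weakly shorter from left to right, so that the addable node in
  column \<open>c\<close> is always the top of that column, and it makes the rows decrease to the right.
  For a tableau of this shape, inserting its columns one after the other, each read from top to
  bottom, rebuilds it column by column, every new entry pushing the current column up one row.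
  That reading word lists the positions of \<open>w\<close> sorted by letter and then by position, which is
  exactly \<open>\<sigma>\<^sup>-\<^sup>1\<close>.\<close>

lemma sorted_wrt_irreflp_distinct: "sorted_wrt R xs \<Longrightarrow> irreflp R \<Longrightarrow> distinct xs"
  by (induction xs) (auto simp: irreflp_def)

lemma sorted_wrt_set_take:
  assumes sorted: "sorted_wrt R xs" and "asymp R" and i: "i < length xs"
  shows "{x \<in> set xs. R x (xs ! i)} = set (take i xs)"
proof
  show "set (take i xs) \<subseteq> {x \<in> set xs. R x (xs ! i)}"
    using sorted_wrt_nth_less[OF sorted] i by (auto simp: in_set_conv_nth dest: in_set_takeD)
  show "{x \<in> set xs. R x (xs ! i)} \<subseteq> set (take i xs)"
  proof clarify
    fix x assume "x \<in> set xs" "R x (xs ! i)"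
    then obtain j where j: "j < length xs" "x = xs ! j"
      by (auto simp: in_set_conv_nth)
    have "j < i"
    proof (rule ccontr)
      assume "\<not> j < i"
      then have "j = i \<or> R (xs ! i) (xs ! j)"
        using sorted_wrt_nth_less[OF sorted, of i j] j by (cases "i < j") auto
      then show False
        using \<open>R x (xs ! i)\<close> \<open>asymp R\<close> j by (auto dest: asympD)
    qed
    then show "x \<in> set (take i xs)"
      using j by (auto simp: in_set_conv_nth)
  qed
qed

lemma card_set_take_distinct: "distinct xs \<Longrightarrow> i \<le> length xs \<Longrightarrow> card (set (take i xs)) = i"
  by (simp add: distinct_card)

section \<open>Tableaux given by their columns\<close>

text \<open>A list of columns, each listed from the bottom row upwards, determines the rows of a tableau.\<close>

definition cols_row :: "nat list list \<Rightarrow> nat \<Rightarrow> nat list" where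
  "cols_row cols i = map (\<lambda>c. c ! i) (filter (\<lambda>c. i < length c) cols)"

definition cols_height :: "nat list list \<Rightarrow> nat" where
  "cols_height cols = foldr (\<lambda>c m. max (length c) m) cols 0"

definition tableau_of_cols :: "nat list list \<Rightarrow> tableau" where
  "tableau_of_cols cols = map (cols_row cols) [0..<cols_height cols]"

lemma cols_height_Nil [simp]: "cols_height [] = 0"
  by (simp add: cols_height_def)

lemma cols_height_Cons [simp]: "cols_height (c # cols) = max (length c) (cols_height cols)"
  by (simp add: cols_height_def)

lemma cols_height_append [simp]: "cols_height (xs @ ys) = max (cols_height xs) (cols_height ys)"
  by (induction xs) auto

lemma length_le_cols_height: "c \<in> set cols \<Longrightarrow> length c \<le> cols_height cols"
  by (induction cols) auto

lemma cols_height_le: "\<forall>c\<in>set cols. length c \<le> h \<Longrightarrow> cols_height cols \<le> h"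
  by (induction cols) auto

lemma cols_row_beyond_height: "cols_height cols \<le> i \<Longrightarrow> cols_row cols i = []"
  unfolding cols_row_def using length_le_cols_height by (fastforce simp: filter_empty_conv)

lemma cols_row_append [simp]: "cols_row (xs @ ys) i = cols_row xs i @ cols_row ys i"
  by (simp add: cols_row_def)

lemma cols_row_Cons [simp]:
  "cols_row (c # cols) i = (if i < length c then [c ! i] else []) @ cols_row cols i"
  by (simp add: cols_row_def)

fun append_col :: "tableau \<Rightarrow> nat list \<Rightarrow> tableau" where
  "append_col Rs [] = Rs"
| "append_col [] (z # zs) = [z] # append_col [] zs"
| "append_col (R # Rs) (z # zs) = (R @ [z]) # append_col Rs zs"

lemma length_append_col [simp]: "length (append_col Rs zs) = max (length Rs) (length zs)"
  by (induction Rs zs rule: append_col.induct) auto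

lemma nth_append_col:
  "i < length (append_col Rs zs) \<Longrightarrow>
   append_col Rs zs ! i = (if i < length Rs then Rs ! i else []) @ (if i < length zs then [zs ! i] else [])"
  by (induction Rs zs arbitrary: i rule: append_col.induct) (auto simp: nth_Cons split: nat.split)

lemma append_col_tableau_of_cols: "append_col (tableau_of_cols cols) c = tableau_of_cols (cols @ [c])"
proof (rule nth_equalityI)
  show "length (append_col (tableau_of_cols cols) c) = length (tableau_of_cols (cols @ [c]))"
    by (simp add: tableau_of_cols_def)
next
  fix i assume "i < length (append_col (tableau_of_cols cols) c)"
  then show "append_col (tableau_of_cols cols) c ! i = tableau_of_cols (cols @ [c]) ! i"
    by (auto simp: nth_append_col tableau_of_cols_def cols_row_beyond_height)
qed

section \<open>Inserting the column reading word\<close>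

lemma rs_insert_single_col:
  "\<forall>z\<in>set zs. z < y \<Longrightarrow> sorted_wrt (>) zs \<Longrightarrow> rs_insert y (append_col [] zs) = [y] # append_col [] zs"
proof (induction zs arbitrary: y)
  case Nil
  then show ?case by simp
next
  case (Cons z zs)
  have "rs_insert z (append_col [] zs) = [z] # append_col [] zs"
    using Cons by auto
  moreover have "{x \<in> set [z]. x < y} = {z}"
    using Cons by auto
  ultimately show ?case
    using Cons by simp
qed

text \<open>Inserting \<open>y\<close> bumps every entry of the partial last column \<open>zs\<close> one row up.\<close>

lemma rs_insert_append_col:
  assumes "sorted_wrt (>) (y # zs)"
    and "\<forall>i < length (y # zs). i < length Rs \<longrightarrow> (\<forall>x\<in>set (Rs ! i). (y # zs) ! i < x)"
  shows "rs_insert y (append_col Rs zs) = append_col Rs (y # zs)"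
  using assms
proof (induction Rs arbitrary: y zs)
  case Nil
  then show ?case using rs_insert_single_col by simp
next
  case (Cons R Rs)
  have R: "\<forall>x\<in>set R. y < x"
    using Cons.prems(2) by force
  show ?case
  proof (cases zs)
    case Nil
    then show ?thesis using R by auto
  next
    case (Cons z zs')
    have zy: "z < y"
      using Cons.prems(1) Cons by simp
    have bumped: "{x \<in> set (R @ [z]). x < y} = {z}"
      using R zy by auto
    have replaced: "map (\<lambda>x. if x = z then y else x) (R @ [z]) = R @ [y]"
      using R zy by (induction R) auto
    have "rs_insert z (append_col Rs zs') = append_col Rs (z # zs')"
    proof (rule Cons.IH)
      show "sorted_wrt (>) (z # zs')"
        using Cons.prems(1) \<open>zs = z # zs'\<close> by simp
      show "\<forall>i < length (z # zs'). i < length Rs \<longrightarrow> (\<forall>x\<in>set (Rs ! i). (z # zs') ! i < x)"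
        using Cons.prems(2) \<open>zs = z # zs'\<close> by (metis Suc_less_eq length_Cons nth_Cons_Suc)
    qed
    then show ?thesis
      using Cons bumped replaced zy by auto
  qed
qed

lemma foldl_rs_insert_append_col:
  assumes "sorted_wrt (>) (rev ys @ zs)"
    and "\<forall>i < length (rev ys @ zs). i < length Rs \<longrightarrow> (\<forall>x\<in>set (Rs ! i). (rev ys @ zs) ! i < x)"
  shows "foldl (\<lambda>T y. rs_insert y T) (append_col Rs zs) ys = append_col Rs (rev ys @ zs)"
  using assms
proof (induction ys arbitrary: zs)
  case Nil
  then show ?case by simp
next
  case (Cons y ys)
  let ?c = "rev ys @ y # zs"
  have c: "rev (y # ys) @ zs = ?c" by simp
  have "rs_insert y (append_col Rs zs) = append_col Rs (y # zs)"
  proof (rule rs_insert_append_col)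
    show "sorted_wrt (>) (y # zs)"
      using Cons.prems(1) c by (simp add: sorted_wrt_append)
    show "\<forall>i < length (y # zs). i < length Rs \<longrightarrow> (\<forall>x\<in>set (Rs ! i). (y # zs) ! i < x)"
    proof (intro allI impI ballI)
      fix i x assume i: "i < length (y # zs)" "i < length Rs" "x \<in> set (Rs ! i)"
      have "(y # zs) ! i = ?c ! (length ys + i)"
        by (simp add: nth_append)
      also have "\<dots> \<le> ?c ! i"
        using sorted_wrt_nth_less[of "(>)" ?c i "length ys + i"] Cons.prems(1) c i(1)
        by (cases "length ys = 0") auto
      also have "\<dots> < x"
        using Cons.prems(2) c i by simp
      finally show "(y # zs) ! i < x" .
    qed
  qed
  then show ?case
    using Cons.IH[of "y # zs"] Cons.prems c by simp
qed

definition decreasing_cols :: "nat list list \<Rightarrow> bool" where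
  "decreasing_cols cols \<longleftrightarrow> (\<forall>c\<in>set cols. sorted_wrt (>) c) \<and>
     sorted_wrt (\<lambda>a b. \<forall>i. i < length a \<longrightarrow> i < length b \<longrightarrow> b ! i < a ! i) cols"

theorem P_tab_col_reading:
  "decreasing_cols cols \<Longrightarrow> P_tab (concat (map rev cols)) = tableau_of_cols cols"
proof (induction cols rule: rev_induct)
  case Nil
  then show ?case by (simp add: P_tab_def tableau_of_cols_def)
next
  case (snoc c cols)
  have "decreasing_cols cols" and "sorted_wrt (>) c"
    and right: "\<forall>a\<in>set cols. \<forall>i. i < length a \<longrightarrow> i < length c \<longrightarrow> c ! i < a ! i"
    using snoc.prems by (simp_all add: decreasing_cols_def sorted_wrt_append)
  have "foldl (\<lambda>T y. rs_insert y T) (append_col (tableau_of_cols cols) []) (rev c)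
      = append_col (tableau_of_cols cols) (rev (rev c) @ [])"
    by (rule foldl_rs_insert_append_col)
       (use \<open>sorted_wrt (>) c\<close> right in \<open>auto simp: tableau_of_cols_def cols_row_def\<close>)
  then show ?case
    using snoc.IH[OF \<open>decreasing_cols cols\<close>] append_col_tableau_of_cols by (simp add: P_tab_def)
qed

lemma col_height_le_length: "col_height T c \<le> length T"
  by (simp add: col_height_def)

lemma length_add_in_col: "length (add_in_col c v T) = max (length T) (Suc (col_height T c))"
  using col_height_le_length[of T c] by (simp add: add_in_col_def Let_def)

lemma nth_add_in_col:
  "i < length (add_in_col c v T) \<Longrightarrow>
   add_in_col c v T ! i =
     (if i = col_height T c then (if i < length T then T ! i else []) @ [v] else T ! i)"
  using col_height_le_length[of T c]
  by (auto simp: add_in_col_def Let_def nth_list_update nth_append)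

lemma col_height_tableau_of_cols:
  assumes cols: "cols = A @ C # B"
    and below: "\<forall>x\<in>set B. length x \<le> length C"
    and above: "\<forall>x\<in>set A. length C < length x"
  shows "col_height (tableau_of_cols cols) (Suc (length A)) = length C"
proof -
  have row_reaches: "Suc (length A) \<le> length (cols_row cols i) \<longleftrightarrow> i < length C" for i
  proof
    assume "i < length C"
    then have "cols_row A i = map (\<lambda>c. c ! i) A"
      using above unfolding cols_row_def by (metis (mono_tags, lifting) dual_order.strict_trans filter_True)
    then show "Suc (length A) \<le> length (cols_row cols i)"
      using \<open>i < length C\<close> cols by simp
  next
    assume reach: "Suc (length A) \<le> length (cols_row cols i)"
    show "i < length C"
    proof (rule ccontr)
      assume "\<not> i < length C"
      then have "cols_row B i = []"
        using below unfolding cols_row_def by (fastforce simp: filter_empty_conv)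
      moreover have "length (cols_row A i) \<le> length A"
        by (simp add: cols_row_def)
      ultimately show False
        using reach cols \<open>\<not> i < length C\<close> by simp
    qed
  qed
  have "length C \<le> cols_height cols"
    using length_le_cols_height cols by simp
  have "col_height (tableau_of_cols cols) (Suc (length A))
      = length (filter (\<lambda>i. Suc (length A) \<le> length (cols_row cols i)) [0..<cols_height cols])"
    by (simp add: col_height_def tableau_of_cols_def filter_map o_def)
  also have "\<dots> = card {i. i < cols_height cols \<and> i < length C}"
    by (auto simp: length_filter_conv_card row_reaches intro!: arg_cong[where f=card])
  also have "{i. i < cols_height cols \<and> i < length C} = {..<length C}"
    using \<open>length C \<le> cols_height cols\<close> by auto
  finally show ?thesis by simp
qed

lemma add_in_col_tableau_of_cols:
  assumes k: "k < length cols"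
    and sorted: "sorted_wrt (\<lambda>x y. length y \<le> length x) cols"
    and shorter: "\<forall>j<k. length (cols ! k) < length (cols ! j)"
  shows "add_in_col (Suc k) v (tableau_of_cols cols) = tableau_of_cols (cols[k := cols ! k @ [v]])"
proof -
  define A where "A = take k cols"
  define C where "C = cols ! k"
  define B where "B = drop (Suc k) cols"
  let ?T = "tableau_of_cols cols"
  let ?new = "A @ (C @ [v]) # B"
  have cols: "cols = A @ C # B"
    using k by (simp add: A_def B_def C_def id_take_nth_drop)
  have new: "cols[k := cols ! k @ [v]] = ?new"
    using k by (simp add: A_def B_def C_def upd_conv_take_nth_drop)
  have "length A = k"
    using k by (simp add: A_def)
  have below: "\<forall>x\<in>set B. length x \<le> length C"
    using sorted cols by (simp add: sorted_wrt_append)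
  have above: "\<forall>x\<in>set A. length C < length x"
    using shorter \<open>length A = k\<close> unfolding A_def C_def by (auto simp: in_set_conv_nth)
  have height: "col_height ?T (Suc k) = length C"
    using col_height_tableau_of_cols[OF cols below above] \<open>length A = k\<close> by simp
  have "cols_height B \<le> length C"
    using below cols_height_le by blast
  then have B_row: "cols_row B i = []" if "length C \<le> i" for i
    using cols_row_beyond_height[of B i] that by simp
  have H: "cols_height cols = max (cols_height A) (length C)"
    using cols \<open>cols_height B \<le> length C\<close> by simp
  have H': "cols_height ?new = max (cols_height A) (Suc (length C))"
    using \<open>cols_height B \<le> length C\<close> by simp
  have new_row: "cols_row ?new i =
      (if i = length C then cols_row cols i @ [v] else cols_row cols i)" for i
    using cols B_row by (auto simp: nth_append)
  have "add_in_col (Suc k) v ?T = tableau_of_cols ?new"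
  proof (rule nth_equalityI)
    show "length (add_in_col (Suc k) v ?T) = length (tableau_of_cols ?new)"
      using H H' height by (simp add: length_add_in_col tableau_of_cols_def)
  next
    fix i assume "i < length (add_in_col (Suc k) v ?T)"
    then have "i < cols_height ?new"
      using H H' height by (simp add: length_add_in_col tableau_of_cols_def)
    then show "add_in_col (Suc k) v ?T ! i = tableau_of_cols ?new ! i"
      using H H' height new_row cols_row_beyond_height[of cols "length C"]
      by (auto simp: nth_add_in_col length_add_in_col tableau_of_cols_def simp del: upt_Suc)
  qed
  then show ?thesis
    using new by simp
qed

lemma reverse_lattice_iff_drop:
  "reverse_lattice w \<longleftrightarrow>
     (\<forall>q j. 1 \<le> j \<longrightarrow> count_list (drop q w) (Suc j) \<le> count_list (drop q w) j)"
proof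
  assume lattice: "reverse_lattice w"
  show "\<forall>q j. 1 \<le> j \<longrightarrow> count_list (drop q w) (Suc j) \<le> count_list (drop q w) j"
  proof (intro allI impI)
    fix q j :: nat assume "1 \<le> j"
    show "count_list (drop q w) (Suc j) \<le> count_list (drop q w) j"
    proof (cases "q \<le> length w")
      case True
      have "length w - q \<le> length w" by simp
      then have "count_list (drop (length w - (length w - q)) w) (Suc j)
          \<le> count_list (drop (length w - (length w - q)) w) j"
        using lattice \<open>1 \<le> j\<close> unfolding reverse_lattice_def by blast
      then show ?thesis
        using True by simp
    qed simp
  qed
qed (auto simp: reverse_lattice_def)

lemma reverse_lattice_drop: "reverse_lattice w \<Longrightarrow> reverse_lattice (drop q w)"
  by (simp add: reverse_lattice_iff_drop)

lemma reverse_lattice_Cons: "reverse_lattice (a # u) \<Longrightarrow> reverse_lattice u"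
  using reverse_lattice_drop[of "a # u" 1] by simp

lemma reverse_lattice_count_antimono:
  assumes "reverse_lattice u" and "1 \<le> c" and "c \<le> c'"
  shows "count_list u c' \<le> count_list u c"
proof -
  have "\<forall>j. 1 \<le> j \<longrightarrow> count_list (drop 0 u) (Suc j) \<le> count_list (drop 0 u) j"
    using assms(1) unfolding reverse_lattice_iff_drop by blast
  then have "count_list u (Suc (Suc n)) \<le> count_list u (Suc n)" for n
    by simp
  then have "count_list u (Suc (c' - 1)) \<le> count_list u (Suc (c - 1))"
    by (rule lift_Suc_antimono_le[of "\<lambda>n. count_list u (Suc n)"]) (use assms in auto)
  then show ?thesis
    using assms by simp
qed

section \<open>The tableau \<open>T\<^sub>w\<close> and its letter columns\<close>

definition occurrences :: "nat list \<Rightarrow> nat \<Rightarrow> nat list" where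
  "occurrences u c = filter (\<lambda>p. u ! p = c) [0..<length u]"

lemma occurrences_Nil [simp]: "occurrences [] c = []"
  by (simp add: occurrences_def)

lemma occurrences_Cons:
  "occurrences (a # u) c = (if a = c then [0] else []) @ map Suc (occurrences u c)"
proof -
  have "[0..<length (a # u)] = 0 # map Suc [0..<length u]"
    by (simp add: upt_conv_Cons map_Suc_upt del: upt_Suc)
  then show ?thesis
    by (simp add: occurrences_def filter_map o_def)
qed

lemma length_occurrences: "length (occurrences u c) = count_list u c"
  by (induction u) (auto simp: occurrences_Cons)

lemma set_occurrences: "set (occurrences u c) = {p. p < length u \<and> u ! p = c}"
  by (auto simp: occurrences_def)

lemma sorted_occurrences: "sorted_wrt (<) (occurrences u c)"
  unfolding occurrences_def by (rule sorted_wrt_filter[OF sorted_wrt_upt])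

text \<open>The box of \<open>T\<^sub>w\<close> coming from position \<open>p\<close> of the list \<open>w\<close> (0-indexed) contains \<open>p + 1\<close>,
  so column \<open>c\<close> holds the positions of the letter \<open>c\<close>, the rightmost one at the bottom.
  The offset \<open>d\<close> accounts for the letters of a longer word preceding \<open>u\<close>.\<close>

definition letter_col :: "nat \<Rightarrow> nat list \<Rightarrow> nat \<Rightarrow> nat list" where
  "letter_col d u c = rev (map (\<lambda>p. p + d) (occurrences u c))"

definition letter_cols :: "nat \<Rightarrow> nat \<Rightarrow> nat list \<Rightarrow> nat list list" where
  "letter_cols M d u = map (letter_col d u) [1..<Suc M]"

lemma letter_col_Cons:
  "letter_col d (a # u) c = letter_col (Suc d) u c @ (if a = c then [d] else [])"
  by (simp add: letter_col_def occurrences_Cons o_def)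

lemma length_letter_col: "length (letter_col d u c) = count_list u c"
  by (simp add: letter_col_def length_occurrences)

lemma length_letter_cols [simp]: "length (letter_cols M d u) = M"
  by (simp add: letter_cols_def)

lemma nth_letter_cols: "j < M \<Longrightarrow> letter_cols M d u ! j = letter_col d u (Suc j)"
  by (simp add: letter_cols_def del: upt_Suc)

lemma letter_cols_Cons:
  assumes "1 \<le> a" "a \<le> M"
  shows "letter_cols M d (a # u) =
    (letter_cols M (Suc d) u)[a - 1 := letter_cols M (Suc d) u ! (a - 1) @ [d]]"
  by (rule nth_equalityI) (use assms in \<open>auto simp: nth_letter_cols letter_col_Cons nth_list_update\<close>)

lemma letter_cols_length_antimono:
  "reverse_lattice u \<Longrightarrow> sorted_wrt (\<lambda>x y. length y \<le> length x) (letter_cols M d u)"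
  unfolding letter_cols_def sorted_wrt_map
  by (rule sorted_wrt_mono_rel[OF _ sorted_wrt_upt])
     (auto simp: length_letter_col intro: reverse_lattice_count_antimono)

fun T_from :: "nat \<Rightarrow> nat list \<Rightarrow> tableau" where
  "T_from d [] = []"
| "T_from d (a # u) = add_in_col a d (T_from (Suc d) u)"

lemma foldl_add_in_col_eq_T_from:
  "m \<le> length w \<Longrightarrow>
   foldl (\<lambda>T k. add_in_col (w ! (length w - k)) (length w - k + 1) T) [] [1..<Suc m]
   = T_from (length w - m + 1) (drop (length w - m) w)"
proof (induction m)
  case 0
  then show ?case by simp
next
  case (Suc m)
  have "drop (length w - Suc m) w = w ! (length w - Suc m) # drop (length w - m) w"
    using Suc.prems Cons_nth_drop_Suc[of "length w - Suc m" w] by (simp add: Suc_diff_Suc)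
  moreover have "Suc (length w - Suc m + 1) = length w - m + 1"
    using Suc.prems by simp
  ultimately show ?case
    using Suc by simp
qed

lemma T_of_word_eq_T_from: "T_of_word w = T_from 1 w"
  using foldl_add_in_col_eq_T_from[of "length w" w] by (simp add: T_of_word_def)

theorem T_from_eq_tableau_of_letter_cols:
  "\<forall>a\<in>set u. 1 \<le> a \<and> a \<le> M \<Longrightarrow> reverse_lattice u \<Longrightarrow>
   T_from d u = tableau_of_cols (letter_cols M d u)"
proof (induction u arbitrary: d)
  case Nil
  have "cols_height (letter_cols M d []) = 0"
    by (rule order_antisym, rule cols_height_le) (auto simp: letter_cols_def letter_col_def)
  then show ?case
    by (simp add: tableau_of_cols_def)
next
  case (Cons a u)
  let ?cols = "letter_cols M (Suc d) u"
  have "reverse_lattice u"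
    using reverse_lattice_Cons Cons.prems(2) by blast
  have a: "1 \<le> a" "a \<le> M"
    using Cons.prems(1) by auto
  have "T_from d (a # u) = add_in_col (Suc (a - 1)) d (tableau_of_cols ?cols)"
    using Cons a \<open>reverse_lattice u\<close> by simp
  also have "\<dots> = tableau_of_cols (?cols[a - 1 := ?cols ! (a - 1) @ [d]])"
  proof (rule add_in_col_tableau_of_cols)
    show "a - 1 < length ?cols"
      using a by simp
    show "sorted_wrt (\<lambda>x y. length y \<le> length x) ?cols"
      using letter_cols_length_antimono \<open>reverse_lattice u\<close> .
    show "\<forall>j < a - 1. length (?cols ! (a - 1)) < length (?cols ! j)"
    proof (intro allI impI)
      fix j assume j: "j < a - 1"
      have "count_list (a # u) a \<le> count_list (a # u) (a - 1)"
        using reverse_lattice_count_antimono[OF Cons.prems(2), of "a - 1" a] j by simp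
      then have "Suc (count_list u a) \<le> count_list u (a - 1)"
        using j by (simp split: if_splits)
      moreover have "count_list u (a - 1) \<le> count_list u (Suc j)"
        using reverse_lattice_count_antimono[OF \<open>reverse_lattice u\<close>, of "Suc j" "a - 1"] j by simp
      ultimately show "length (?cols ! (a - 1)) < length (?cols ! j)"
        using j a by (simp add: nth_letter_cols length_letter_col)
    qed
  qed
  also have "\<dots> = tableau_of_cols (letter_cols M d (a # u))"
    using letter_cols_Cons[OF a] by simp
  finally show ?case .
qed

section \<open>The letter columns are decreasing\<close>

lemma count_list_drop_eq_card: "count_list (drop q w) c = card {p \<in> set (occurrences w c). q \<le> p}"
proof -
  have "drop q w = map ((!) w) [q..<length w]"
    by (rule nth_equalityI) auto
  then have "count_list (drop q w) c = length (filter (\<lambda>p. w ! p = c) [q..<length w])"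
    by (simp add: count_list_eq_length_filter filter_map o_def eq_commute)
  also have "\<dots> = card ({p. w ! p = c} \<inter> {q..<length w})"
    by (simp add: distinct_length_filter)
  also have "{p. w ! p = c} \<inter> {q..<length w} = {p \<in> set (occurrences w c). q \<le> p}"
    by (auto simp: set_occurrences)
  finally show ?thesis .
qed

text \<open>In a reverse lattice word the \<open>i\<close>-th last occurrence of a larger letter lies to the left of
  the \<open>i\<close>-th last occurrence of a smaller one: the suffix starting at the former contains
  \<open>i + 1\<close> copies of the larger letter, hence at least as many copies of the smaller one.\<close>

lemma rev_occurrences_nth_less:
  assumes lattice: "reverse_lattice w" and c: "1 \<le> c" "c < c'"
    and i: "i < count_list w c" "i < count_list w c'"
  shows "rev (occurrences w c') ! i < rev (occurrences w c) ! i"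
proof (rule ccontr)
  define D where "D x = rev (occurrences w x)" for x
  have sorted: "sorted_wrt (>) (D x)" and distinct: "distinct (D x)"
    and length: "length (D x) = count_list w x" for x
    using sorted_occurrences[of w x] sorted_wrt_irreflp_distinct[of "(<)" "occurrences w x"]
    by (simp_all add: D_def sorted_wrt_rev length_occurrences irreflp_def)
  have upper: "{p \<in> set (D x). D x ! j < p} = set (take j (D x))" if "j < count_list w x" for x j
    using sorted_wrt_set_take[OF sorted, of j] that length by (simp add: asymp_on_def)
  define q where "q = D c' ! i"
  assume "\<not> D c' ! i < D c ! i"
  then have "D c ! i \<le> q"
    by (simp add: q_def D_def)
  have "q \<in> set (D c')"
    using i length by (simp add: q_def)
  then have "w ! q = c'"
    by (simp add: D_def set_occurrences)
  have "{p \<in> set (D c'). q \<le> p} = insert q {p \<in> set (D c'). D c' ! i < p}"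
    using \<open>q \<in> set (D c')\<close> by (auto simp: q_def)
  also have "\<dots> = set (take (Suc i) (D c'))"
    using upper[OF i(2)] i length by (simp add: q_def take_Suc_conv_app_nth)
  finally have "card {p \<in> set (D c'). q \<le> p} = Suc i"
    using card_set_take_distinct[OF distinct, of "Suc i" c'] i length by simp
  then have "Suc i \<le> count_list (drop q w) c'"
    by (simp add: count_list_drop_eq_card D_def)
  also have "\<dots> \<le> count_list (drop q w) c"
    using reverse_lattice_count_antimono[OF reverse_lattice_drop[OF lattice]] c by simp
  also have "\<dots> = card {p \<in> set (D c). q \<le> p}"
    by (simp add: count_list_drop_eq_card D_def)
  also have "\<dots> \<le> card (set (take i (D c)))"
  proof (rule card_mono)
    have "p \<noteq> q" if "p \<in> set (D c)" for p
      using that \<open>w ! q = c'\<close> c by (auto simp: D_def set_occurrences)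
    then show "{p \<in> set (D c). q \<le> p} \<subseteq> set (take i (D c))"
      unfolding upper[OF i(1), symmetric] using \<open>D c ! i \<le> q\<close> by fastforce
  qed simp
  also have "\<dots> = i"
    using card_set_take_distinct[OF distinct] i length by simp
  finally show False by simp
qed

lemma decreasing_letter_cols:
  assumes "reverse_lattice w"
  shows "decreasing_cols (letter_cols M d w)"
  unfolding decreasing_cols_def
proof
  show "\<forall>c\<in>set (letter_cols M d w). sorted_wrt (>) c"
    using sorted_occurrences
    by (auto simp: letter_cols_def letter_col_def sorted_wrt_rev sorted_wrt_map simp del: upt_Suc)
  show "sorted_wrt (\<lambda>a b. \<forall>i. i < length a \<longrightarrow> i < length b \<longrightarrow> b ! i < a ! i) (letter_cols M d w)"
    unfolding letter_cols_def sorted_wrt_map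
    by (rule sorted_wrt_mono_rel[OF _ sorted_wrt_upt])
       (auto simp: letter_col_def length_occurrences rev_map
             intro!: rev_occurrences_nth_less[OF assms] simp del: upt_Suc)
qed

section \<open>The inverse of the standardization\<close>

lemma perm_inv_eqI:
  assumes set: "set L = {..<length s}" and length: "length L = length s"
    and inverse: "\<And>i. i < length L \<Longrightarrow> s ! (L ! i) = Suc i"
  shows "perm_inv s = map Suc L"
proof (rule nth_equalityI)
  show "length (perm_inv s) = length (map Suc L)"
    using length by (simp add: perm_inv_def del: upt_Suc)
next
  fix i assume "i < length (perm_inv s)"
  then have i: "i < length L"
    using length by (simp add: perm_inv_def del: upt_Suc)
  have "(THE p. p < length s \<and> s ! p = Suc i) = L ! i"
  proof (rule the_equality)
    show "L ! i < length s \<and> s ! (L ! i) = Suc i"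
      using set i inverse nth_mem by fastforce
  next
    fix p assume p: "p < length s \<and> s ! p = Suc i"
    then obtain j where "j < length L" "p = L ! j"
      using set by (metis in_set_conv_nth lessThan_iff)
    then show "p = L ! i"
      using p inverse by fastforce
  qed
  then show "perm_inv s ! i = map Suc L ! i"
    using i length by (simp add: perm_inv_def del: upt_Suc)
qed

definition std_less :: "nat list \<Rightarrow> nat \<Rightarrow> nat \<Rightarrow> bool" where
  "std_less w q p \<longleftrightarrow> w ! q < w ! p \<or> (w ! q = w ! p \<and> q < p)"

lemma length_std [simp]: "length (std w) = length w"
  by (simp add: std_def)

lemma nth_std: "p < length w \<Longrightarrow> std w ! p = Suc (card {q. q < length w \<and> std_less w q p})"
  by (simp add: std_def std_less_def)

lemma asymp_std_less: "asymp (std_less w)"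
  by (auto simp: asymp_on_def std_less_def)

text \<open>The positions of \<open>w\<close> in increasing order of their standardized values.\<close>

definition std_reading :: "nat list \<Rightarrow> nat \<Rightarrow> nat list" where
  "std_reading w M = concat (map (occurrences w) [1..<Suc M])"

lemma sorted_std_reading: "sorted_wrt (std_less w) (std_reading w M)"
proof (induction M)
  case 0
  then show ?case by (simp add: std_reading_def)
next
  case (Suc M)
  have "sorted_wrt (std_less w) (occurrences w (Suc M))"
    by (rule sorted_wrt_mono_rel[OF _ sorted_occurrences]) (auto simp: std_less_def set_occurrences)
  moreover have "std_less w p q" if "p \<in> set (std_reading w M)" "q \<in> set (occurrences w (Suc M))" for p q
    using that by (auto simp: std_reading_def std_less_def set_occurrences simp del: upt_Suc)
  ultimately show ?case
    using Suc.IH by (simp add: std_reading_def sorted_wrt_append)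
qed

lemma distinct_std_reading: "distinct (std_reading w M)"
  using sorted_wrt_irreflp_distinct[OF sorted_std_reading] by (auto simp: irreflp_def std_less_def)

lemma set_std_reading:
  assumes "\<forall>a\<in>set w. 1 \<le> a \<and> a \<le> M"
  shows "set (std_reading w M) = {..<length w}"
proof -
  have "set (std_reading w M) = {p. p < length w \<and> w ! p \<in> {1..<Suc M}}"
    by (auto simp: std_reading_def set_occurrences simp del: upt_Suc)
  then show ?thesis
    using assms nth_mem by fastforce
qed

lemma length_std_reading:
  "\<forall>a\<in>set w. 1 \<le> a \<and> a \<le> M \<Longrightarrow> length (std_reading w M) = length w"
  by (metis card_lessThan distinct_card distinct_std_reading set_std_reading)

lemma std_nth_std_reading:
  assumes letters: "\<forall>a\<in>set w. 1 \<le> a \<and> a \<le> M" and i: "i < length w"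
  shows "std w ! (std_reading w M ! i) = Suc i"
proof -
  let ?L = "std_reading w M"
  have length: "length ?L = length w" and set: "set ?L = {..<length w}"
    using length_std_reading[OF letters] set_std_reading[OF letters] .
  have "{q. q < length w \<and> std_less w q (?L ! i)} = {q \<in> set ?L. std_less w q (?L ! i)}"
    using set by auto
  also have "\<dots> = set (take i ?L)"
    using sorted_wrt_set_take[OF sorted_std_reading asymp_std_less] i length by simp
  finally have "card {q. q < length w \<and> std_less w q (?L ! i)} = i"
    using card_set_take_distinct[OF distinct_std_reading] i length by simp
  moreover have "?L ! i < length w"
    using set i length nth_mem by fastforce
  ultimately show ?thesis
    by (simp add: nth_std)
qed

lemma perm_inv_std:
  "\<forall>a\<in>set w. 1 \<le> a \<and> a \<le> M \<Longrightarrow> perm_inv (std w) = map Suc (std_reading w M)"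
  by (rule perm_inv_eqI)
     (simp_all add: set_std_reading length_std_reading std_nth_std_reading)

lemma col_reading_letter_cols:
  "concat (map rev (letter_cols M 1 w)) = map Suc (std_reading w M)"
  by (simp add: letter_cols_def letter_col_def std_reading_def map_concat o_def)

theorem corollary8p3:
  fixes w :: "nat list"
  assumes "\<forall>i \<in> set w. 1 \<le> i"
    and "reverse_lattice w"
  shows "T_of_word w = P_tab (perm_inv (std w))"
proof -
  define M where "M = sum_list w"
  have letters: "\<forall>a\<in>set w. 1 \<le> a \<and> a \<le> M"
    using assms(1) by (auto simp: M_def member_le_sum_list)
  have "T_of_word w = tableau_of_cols (letter_cols M 1 w)"
    using T_of_word_eq_T_from T_from_eq_tableau_of_letter_cols[OF letters assms(2)] by simp
  also have "\<dots> = P_tab (concat (map rev (letter_cols M 1 w)))"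
    using P_tab_col_reading[OF decreasing_letter_cols[OF assms(2)]] by simp
  also have "concat (map rev (letter_cols M 1 w)) = perm_inv (std w)"
    using col_reading_letter_cols perm_inv_std[OF letters] by simp
  finally show ?thesis .
qed

end
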